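(* Let $m_1,m_2,m_3>0$ with $m_1+m_2+m_3=1$, and consider the Hamiltonian of the spatial restricted four-body problem in the synodic (rotating) frame, $$H=\tfrac12(p_x^2+p_y^2+p_z^2)+yp_x-xp_y-\frac{m_1}{r_1}-\frac{m_2}{r_2}-\frac{m_3}{r_3},\qquad r_i=\sqrt{(x-x_i)^2+(y-y_i)^2+z^2},$$ where $(x_i,y_i,0)$ are the positions of the primaries, given by (with $K=m_2(m_3-m_2)+m_1(m_2+2m_3)$ and $S=\sqrt{m_2^2+m_2m_3+m_3^2}$) $$x_1=-\frac{|K|S}{K},\ y_1=0,\quad x_2=\frac{|K|[(m_2-m_3)m_3+m_1(2m_2+m_3)]}{2KS},\ y_2=-\frac{\sqrt3\,m_3}{2m_2^{3/2}}\sqrt{\frac{m_2^3}{S^2}},\quad x_3=\frac{|K|}{2S},\ y_3=\frac{\sqrt3}{2\sqrt{m_2}}\sqrt{\frac{m_2^3}{S^2}}.$$ Translate the origin to $m_3$ by $x\to x+x_3$, $y\to y+y_3$, $z\to z$, $p_x\to p_x-y_3$, $p_y\to p_y+x_3$, $p_z\to p_z$, discard additive constants, and then apply the symplectic scaling $(x,y,z,p_x,p_y,p_z)\to m_3^{1/3}(x,y,z,p_x,p_y,p_z)$ with multiplier $m_3^{-2/3}$. Then, writing $m_2=\mu$ and letting $m_3\to0$ (so that $m_1=1-\mu$ in the limit), the limit of the resulting Hamiltonian (in a neighborhood of $m_3$) exists and equals $$H=\tfrac12(p_x^2+p_y^2+p_z^2)+yp_x-xp_y+\tfrac18x^2-\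tfrac{3\sqrt3}{4}(1-2\mu)xy-\tfrac58y^2+\tfrac12z^2-\frac{1}{\sqrt{x^2+y^2+z^2}}.$$
   Context: The three masses $m_1,m_2,m_3$ rotate rigidly at the vertices of an equilateral triangle of side $1$ about their common center of mass (placed at the origin), with unit angular velocity; the frame rotates with them. The symplectic form is $dp_x\wedge dx+dp_y\wedge dy+dp_z\wedge dz$. A symplectic scaling with multiplier $m_3^{-2/3}$ means the Hamiltonian in the scaled variables is $m_3^{-2/3}$ times the original Hamiltonian composed with the scaling.
   Formalization: The limit is asserted for $0<\mu\le 1/2$ only, taken pointwise as $m_3$ tends to 0 from above at each fixed scaled point whose (x,y,z) is not the origin. Apart from conventions, each condition added here is assumed in the paper as well or is needed for the statement above to hold. *)

theory Defs
  imports "HOL-Analysis.Analysis"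
begin

definition K4 :: "real \<Rightarrow> real \<Rightarrow> real \<Rightarrow> real" where
  "K4 m1 m2 m3 = m2 * (m3 - m2) + m1 * (m2 + 2 * m3)"

definition S4 :: "real \<Rightarrow> real \<Rightarrow> real \<Rightarrow> real" where
  "S4 m1 m2 m3 = sqrt (m2^2 + m2 * m3 + m3^2)"

definition px1 :: "real \<Rightarrow> real \<Rightarrow> real \<Rightarrow> real" where
  "px1 m1 m2 m3 = - \<bar>K4 m1 m2 m3\<bar> * S4 m1 m2 m3 / K4 m1 m2 m3"
definition py1 :: "real \<Rightarrow> real \<Rightarrow> real \<Rightarrow> real" where
  "py1 m1 m2 m3 = 0"
definition px2 :: "real \<Rightarrow> real \<Rightarrow> real \<Rightarrow> real" where
  "px2 m1 m2 m3 = \<bar>K4 m1 m2 m3\<bar> * ((m2 - m3) * m3 + m1 * (2 * m2 + m3))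
                   / (2 * K4 m1 m2 m3 * S4 m1 m2 m3)"
definition py2 :: "real \<Rightarrow> real \<Rightarrow> real \<Rightarrow> real" where
  "py2 m1 m2 m3 = - (sqrt 3 * m3 / (2 * m2 powr (3/2))) * sqrt (m2^3 / (S4 m1 m2 m3)^2)"
definition px3 :: "real \<Rightarrow> real \<Rightarrow> real \<Rightarrow> real" where
  "px3 m1 m2 m3 = \<bar>K4 m1 m2 m3\<bar> / (2 * S4 m1 m2 m3)"
definition py3 :: "real \<Rightarrow> real \<Rightarrow> real \<Rightarrow> real" where
  "py3 m1 m2 m3 = sqrt 3 / (2 * sqrt m2) * sqrt (m2^3 / (S4 m1 m2 m3)^2)"

definition H4 :: "real \<Rightarrow> real \<Rightarrow> real \<Rightarrow>
    real \<Rightarrow> real \<Rightarrow> real \<Rightarrow> real \<Rightarrow> real \<Rightarrow> real \<Rightarrow> real" where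
  "H4 m1 m2 m3 x y z p_x p_y p_z =
     (p_x^2 + p_y^2 + p_z^2) / 2 + y * p_x - x * p_y
     - m1 / sqrt ((x - px1 m1 m2 m3)^2 + (y - py1 m1 m2 m3)^2 + z^2)
     - m2 / sqrt ((x - px2 m1 m2 m3)^2 + (y - py2 m1 m2 m3)^2 + z^2)
     - m3 / sqrt ((x - px3 m1 m2 m3)^2 + (y - py3 m1 m2 m3)^2 + z^2)"

definition H4_trans :: "real \<Rightarrow> real \<Rightarrow> real \<Rightarrow>
    real \<Rightarrow> real \<Rightarrow> real \<Rightarrow> real \<Rightarrow> real \<Rightarrow> real \<Rightarrow> real" where
  "H4_trans m1 m2 m3 x y z p_x p_y p_z =
     H4 m1 m2 m3 (x + px3 m1 m2 m3) (y + py3 m1 m2 m3) z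
        (p_x - py3 m1 m2 m3) (p_y + px3 m1 m2 m3) p_z"

text \<open>The additive constant that is discarded: the constant term of the expansion of the
  translated Hamiltonian about the new origin (position of m3), i.e.
  -(x3^2+y3^2)/2 - m1/|P3 - P1| - m2/|P3 - P2|.\<close>

definition C4 :: "real \<Rightarrow> real \<Rightarrow> real \<Rightarrow> real" where
  "C4 m1 m2 m3 =
     - ((px3 m1 m2 m3)^2 + (py3 m1 m2 m3)^2) / 2
     - m1 / sqrt ((px3 m1 m2 m3 - px1 m1 m2 m3)^2 + (py3 m1 m2 m3 - py1 m1 m2 m3)^2)
     - m2 / sqrt ((px3 m1 m2 m3 - px2 m1 m2 m3)^2 + (py3 m1 m2 m3 - py2 m1 m2 m3)^2)"

definition H4_scaled :: "real \<Rightarrow> real \<Rightarrow>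
    real \<Rightarrow> real \<Rightarrow> real \<Rightarrow> real \<Rightarrow> real \<Rightarrow> real \<Rightarrow> real" where
  "H4_scaled mu m3 x y z p_x p_y p_z =
     (let m1 = 1 - mu - m3; m2 = mu; c = m3 powr (1/3) in
      m3 powr (-(2/3)) *
        (H4_trans m1 m2 m3 (c * x) (c * y) (c * z) (c * p_x) (c * p_y) (c * p_z)
         - C4 m1 m2 m3))"

definition H_lim :: "real \<Rightarrow>
    real \<Rightarrow> real \<Rightarrow> real \<Rightarrow> real \<Rightarrow> real \<Rightarrow> real \<Rightarrow> real" where
  "H_lim mu x y z p_x p_y p_z =
     (p_x^2 + p_y^2 + p_z^2) / 2 + y * p_x - x * p_y + x^2 / 8
     - 3 * sqrt 3 / 4 * (1 - 2 * mu) * x * y - 5 / 8 * y^2 + z^2 / 2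
     - 1 / sqrt (x^2 + y^2 + z^2)"

end

theory Submission
  imports Defs
begin

text \<open>Seen from m3, the primaries m1 and m2 lie at unit distance, and the center of mass
  condition reads P3 = m1 (P3 - P1) + m2 (P3 - P2). Put c = m3 powr (1/3). After the scaling
  q \<mapsto> c q the potential of m3 becomes m3 / (c |q|) = c^2 / |q|, while
  1 / |P3 - Pi + c q| = 1 - c ai + c^2 Ri with ai = (P3 - Pi) \<bullet> q. The constant terms are
  the discarded ones, and the linear terms cancel against those produced by the momentum shift
  because of the center of mass condition. Dividing by c^2 leaves the Kepler and Coriolis parts
  plus m1 R1 + m2 R2, and Ri tends to (|q|^2 - 3 ai^2) / 2 as c \<rightarrow> 0, where P3 - P1 tends
  to (1/2, sqrt 3 / 2) and P3 - P2 to (-1/2, sqrt 3 / 2).\<close>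

text \<open>For a unit vector e, a = e \<bullet> q and b = |q|^2 we have
  1 / |e + c q| = 1 - c a + c^2 inv_dist_remainder a b c.\<close>

definition inv_dist_remainder :: "real \<Rightarrow> real \<Rightarrow> real \<Rightarrow> real" where
  "inv_dist_remainder a b c = (1 - c * a - 1 / sqrt (1 + c * (2 * a + c * b))) / c^2"

text \<open>Rationalizing removes the apparent singularity at c = 0: the right-hand side below is
  continuous there.\<close>

lemma inv_dist_remainder_rationalized:
  fixes a b c :: real
  assumes "c \<noteq> 0" and "0 < 1 + c * (2 * a + c * b)"
  defines "w \<equiv> sqrt (1 + c * (2 * a + c * b))"
  shows "inv_dist_remainder a b c = (b - a * (2 * a + c * b) * (2 + w) / (1 + w)) / (w * (1 + w))"
proof -
  have "0 < w" and w2: "w^2 = 1 + c * (2 * a + c * b)"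
    using assms(2) by (simp_all add: w_def)
  have "(1 + w)^2 * (w - 1 - c * a * w) - c^2 * (b * (1 + w) - a * (2 * a + c * b) * (2 + w))
      = (w^2 - (1 + c * (2 * a + c * b))) * (1 + w - c * a * (2 + w))"
    by (simp add: algebra_simps power2_eq_square)
  then have "(1 + w)^2 * (w - 1 - c * a * w) = c^2 * (b * (1 + w) - a * (2 * a + c * b) * (2 + w))"
    by (simp add: w2)
  moreover have "inv_dist_remainder a b c = (1 + w)^2 * (w - 1 - c * a * w) / (c^2 * (w * (1 + w)^2))"
    unfolding inv_dist_remainder_def w_def[symmetric] using \<open>0 < w\<close> assms(1) by (simp add: field_simps)
  moreover have "(b - a * (2 * a + c * b) * (2 + w) / (1 + w)) / (w * (1 + w))
      = (b * (1 + w) - a * (2 * a + c * b) * (2 + w)) / (w * (1 + w)^2)"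
    using \<open>0 < w\<close> by (simp add: field_simps power2_eq_square)
  moreover have "\<dots> = c^2 * (b * (1 + w) - a * (2 * a + c * b) * (2 + w)) / (c^2 * (w * (1 + w)^2))"
    using assms(1) by simp
  ultimately show ?thesis by simp
qed

lemma tendsto_inv_dist_remainder:
  fixes a c :: "'a \<Rightarrow> real"
  assumes a: "(a \<longlongrightarrow> a0) F" and c: "(c \<longlongrightarrow> 0) F" and "eventually (\<lambda>t. c t \<noteq> 0) F"
  shows "((\<lambda>t. inv_dist_remainder (a t) b (c t)) \<longlongrightarrow> (b - 3 * a0^2) / 2) F"
proof -
  define w where "w t = sqrt (1 + c t * (2 * a t + c t * b))" for t
  have radicand: "((\<lambda>t. 1 + c t * (2 * a t + c t * b)) \<longlongrightarrow> 1) F"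
    by (auto intro!: tendsto_eq_intros a c)
  then have w: "(w \<longlongrightarrow> 1) F"
    unfolding w_def using tendsto_real_sqrt by fastforce
  have "((\<lambda>t. (b - a t * (2 * a t + c t * b) * (2 + w t) / (1 + w t)) / (w t * (1 + w t)))
      \<longlongrightarrow> (b - a0 * (2 * a0 + 0 * b) * (2 + 1) / (1 + 1)) / (1 * (1 + 1))) F"
    by (intro tendsto_intros a c w) simp_all
  moreover have "eventually (\<lambda>t. inv_dist_remainder (a t) b (c t)
      = (b - a t * (2 * a t + c t * b) * (2 + w t) / (1 + w t)) / (w t * (1 + w t))) F"
    using order_tendstoD(1)[OF radicand zero_less_one] assms(3)
    by eventually_elim (simp add: w_def inv_dist_remainder_rationalized)
  ultimately show ?thesis
    by (auto simp: power2_eq_square elim: Lim_transform_eventually[OF _ eventually_mono])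
qed

lemma primary_positions:
  fixes m1 m2 m3 :: real
  assumes "0 < m2" and "0 \<le> m3" and "0 < K4 m1 m2 m3"
  defines "S \<equiv> S4 m1 m2 m3"
  shows "0 < S" and "S^2 = m2^2 + m2 * m3 + m3^2"
    and "px1 m1 m2 m3 = - S"
    and "px2 m1 m2 m3 = ((m2 - m3) * m3 + m1 * (2 * m2 + m3)) / (2 * S)"
    and "py2 m1 m2 m3 = - sqrt 3 * m3 / (2 * S)"
    and "px3 m1 m2 m3 = K4 m1 m2 m3 / (2 * S)"
    and "py3 m1 m2 m3 = sqrt 3 * m2 / (2 * S)"
proof -
  have "0 < m2^2 + m2 * m3 + m3^2"
    using assms(1,2) by (simp add: add_pos_nonneg)
  then show S: "0 < S" and "S^2 = m2^2 + m2 * m3 + m3^2"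
    by (simp_all add: S_def S4_def)
  have sqrt_ratio: "sqrt (m2^3 / S^2) = m2 * sqrt m2 / S"
    using S assms(1) by (simp add: real_sqrt_divide real_sqrt_mult power3_eq_cube)
  have "m2 powr (3/2) = m2 powr (1 + 1/2)"
    by simp
  also have "\<dots> = m2 powr 1 * m2 powr (1/2)"
    by (rule powr_add)
  finally have "m2 powr (3/2) = m2 * sqrt m2"
    using assms(1) by (simp add: powr_half_sqrt)
  then show "py2 m1 m2 m3 = - sqrt 3 * m3 / (2 * S)" and "py3 m1 m2 m3 = sqrt 3 * m2 / (2 * S)"
    using S assms(1) by (simp_all add: py2_def py3_def S_def[symmetric] sqrt_ratio field_simps)
  show "px1 m1 m2 m3 = - S"
    and "px2 m1 m2 m3 = ((m2 - m3) * m3 + m1 * (2 * m2 + m3)) / (2 * S)"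
    and "px3 m1 m2 m3 = K4 m1 m2 m3 / (2 * S)"
    using assms(3) S by (simp_all add: px1_def px2_def px3_def S_def[symmetric])
qed

lemma primaries_center_of_mass:
  fixes m1 m2 m3 :: real
  assumes "0 < m2" and "0 \<le> m3" and "0 < K4 m1 m2 m3"
  shows "m1 * px1 m1 m2 m3 + m2 * px2 m1 m2 m3 + m3 * px3 m1 m2 m3 = 0"
    and "m1 * py1 m1 m2 m3 + m2 * py2 m1 m2 m3 + m3 * py3 m1 m2 m3 = 0"
proof -
  note P = primary_positions[OF assms]
  have "m1 * px1 m1 m2 m3 + m2 * px2 m1 m2 m3 + m3 * px3 m1 m2 m3
      = (m2 * ((m2 - m3) * m3 + m1 * (2 * m2 + m3)) + m3 * K4 m1 m2 m3 - 2 * m1 * (S4 m1 m2 m3)^2)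
        / (2 * S4 m1 m2 m3)"
    unfolding P(3,4,6) using P(1) by (simp add: field_simps power2_eq_square)
  also have "m2 * ((m2 - m3) * m3 + m1 * (2 * m2 + m3)) + m3 * K4 m1 m2 m3 - 2 * m1 * (S4 m1 m2 m3)^2 = 0"
    unfolding P(2) K4_def by algebra
  finally show "m1 * px1 m1 m2 m3 + m2 * px2 m1 m2 m3 + m3 * px3 m1 m2 m3 = 0"
    by simp
  show "m1 * py1 m1 m2 m3 + m2 * py2 m1 m2 m3 + m3 * py3 m1 m2 m3 = 0"
    unfolding P(5,7) py1_def by (simp add: field_simps)
qed

lemma primaries_unit_distance:
  fixes m1 m2 m3 :: real
  assumes "0 < m2" and "0 \<le> m3" and "0 < K4 m1 m2 m3" and "m1 + m2 + m3 = 1"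
  shows "(px3 m1 m2 m3 - px1 m1 m2 m3)^2 + (py3 m1 m2 m3 - py1 m1 m2 m3)^2 = 1"
    and "(px3 m1 m2 m3 - px2 m1 m2 m3)^2 + (py3 m1 m2 m3 - py2 m1 m2 m3)^2 = 1"
proof -
  note P = primary_positions[OF assms(1-3)]
  define S where "S = S4 m1 m2 m3"
  have "px3 m1 m2 m3 - px1 m1 m2 m3 = (K4 m1 m2 m3 + 2 * S^2) / (2 * S)"
    unfolding P(3,6) S_def using P(1) by (simp add: field_simps power2_eq_square)
  also have "K4 m1 m2 m3 + 2 * S^2 = m2 + 2 * m3"
    using assms(4) unfolding S_def P(2) K4_def by algebra
  finally have dx1: "px3 m1 m2 m3 - px1 m1 m2 m3 = (m2 + 2 * m3) / (2 * S)" .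
  have "px3 m1 m2 m3 - px2 m1 m2 m3 = (K4 m1 m2 m3 - (m2 - m3) * m3 - m1 * (2 * m2 + m3)) / (2 * S)"
    unfolding P(4,6) S_def using P(1) by (simp add: field_simps)
  also have "K4 m1 m2 m3 - (m2 - m3) * m3 - m1 * (2 * m2 + m3) = m3 - m2"
    using assms(4) unfolding K4_def by algebra
  finally have dx2: "px3 m1 m2 m3 - px2 m1 m2 m3 = (m3 - m2) / (2 * S)" .
  have sum_sq: "(u / (2 * S))^2 + (sqrt 3 * v / (2 * S))^2 = (u^2 + 3 * v^2) / (4 * S^2)" for u v
    by (simp add: power_divide power_mult_distrib add_divide_distrib)
  have dy: "py3 m1 m2 m3 - py1 m1 m2 m3 = sqrt 3 * m2 / (2 * S)"
    "py3 m1 m2 m3 - py2 m1 m2 m3 = sqrt 3 * (m2 + m3) / (2 * S)"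
    unfolding P(5,7) py1_def S_def by (simp_all add: add_divide_distrib algebra_simps)
  have "(m2 + 2 * m3)^2 + 3 * m2^2 = 4 * S^2" and "(m3 - m2)^2 + 3 * (m2 + m3)^2 = 4 * S^2"
    unfolding S_def P(2) by algebra+
  then show "(px3 m1 m2 m3 - px1 m1 m2 m3)^2 + (py3 m1 m2 m3 - py1 m1 m2 m3)^2 = 1"
    and "(px3 m1 m2 m3 - px2 m1 m2 m3)^2 + (py3 m1 m2 m3 - py2 m1 m2 m3)^2 = 1"
    unfolding dx1 dx2 dy sum_sq using P(1) by (simp_all add: S_def)
qed

lemma H4_trans_scaled_expansion:
  fixes m1 m2 m3 c x y z p_x p_y p_z :: real
  defines "a1 \<equiv> (px3 m1 m2 m3 - px1 m1 m2 m3) * x + (py3 m1 m2 m3 - py1 m1 m2 m3) * y"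
    and "a2 \<equiv> (px3 m1 m2 m3 - px2 m1 m2 m3) * x + (py3 m1 m2 m3 - py2 m1 m2 m3) * y"
    and "b \<equiv> x^2 + y^2 + z^2"
  assumes m2: "0 < m2" and K: "0 < K4 m1 m2 m3" and total_mass: "m1 + m2 + m3 = 1"
    and c: "0 < c" and m3: "c^3 = m3"
  shows "(H4_trans m1 m2 m3 (c * x) (c * y) (c * z) (c * p_x) (c * p_y) (c * p_z) - C4 m1 m2 m3) / c^2
    = (p_x^2 + p_y^2 + p_z^2) / 2 + y * p_x - x * p_y - 1 / sqrt b
      + m1 * inv_dist_remainder a1 b c + m2 * inv_dist_remainder a2 b c"
proof -
  define X1 X2 X3 Y1 Y2 Y3
    where "X1 = px1 m1 m2 m3" and "X2 = px2 m1 m2 m3" and "X3 = px3 m1 m2 m3"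
      and "Y1 = py1 m1 m2 m3" and "Y2 = py2 m1 m2 m3" and "Y3 = py3 m1 m2 m3"
  note positions = X1_def[symmetric] X2_def[symmetric] X3_def[symmetric]
    Y1_def[symmetric] Y2_def[symmetric] Y3_def[symmetric]
  have "0 \<le> m3"
    using c m3 by (metis zero_le_power less_imp_le)
  note unit = primaries_unit_distance[OF m2 this K total_mass, unfolded positions]
    and com = primaries_center_of_mass[OF m2 this K, unfolded positions]
  have "(c * x + X3 - X1)^2 + (c * y + Y3 - Y1)^2 + (c * z)^2
      = ((X3 - X1)^2 + (Y3 - Y1)^2) + c * (2 * a1 + c * b)"
    and "(c * x + X3 - X2)^2 + (c * y + Y3 - Y2)^2 + (c * z)^2
      = ((X3 - X2)^2 + (Y3 - Y2)^2) + c * (2 * a2 + c * b)"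
    unfolding a1_def a2_def b_def positions by algebra+
  note dist_primaries = this[unfolded unit]
  have dist_m3: "sqrt ((c * x + X3 - X3)^2 + (c * y + Y3 - Y3)^2 + (c * z)^2) = c * sqrt b"
    using c by (simp add: b_def real_sqrt_mult power_mult_distrib flip: distrib_left)
  \<comment> \<open>the center of mass relation; it makes the linear terms cancel\<close>
  have "X3 * x + Y3 * y = m1 * a1 + m2 * a2"
    using com total_mass unfolding a1_def a2_def positions by algebra
  have "H4_trans m1 m2 m3 (c * x) (c * y) (c * z) (c * p_x) (c * p_y) (c * p_z) - C4 m1 m2 m3
      = c^2 * ((p_x^2 + p_y^2 + p_z^2) / 2 + y * p_x - x * p_y) - c * (X3 * x + Y3 * y)
        - m3 / (c * sqrt b)
        + m1 * (1 - 1 / sqrt (1 + c * (2 * a1 + c * b)))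
        + m2 * (1 - 1 / sqrt (1 + c * (2 * a2 + c * b)))"
    unfolding H4_trans_def H4_def C4_def positions dist_primaries dist_m3 unit
    by (simp add: field_simps power2_eq_square)
  also have "\<dots> = c^2 * ((p_x^2 + p_y^2 + p_z^2) / 2 + y * p_x - x * p_y) - m3 / (c * sqrt b)
        + m1 * (1 - c * a1 - 1 / sqrt (1 + c * (2 * a1 + c * b)))
        + m2 * (1 - c * a2 - 1 / sqrt (1 + c * (2 * a2 + c * b)))"
    unfolding \<open>X3 * x + Y3 * y = m1 * a1 + m2 * a2\<close> by (simp add: algebra_simps)
  also have "\<dots> = c^2 * ((p_x^2 + p_y^2 + p_z^2) / 2 + y * p_x - x * p_y - 1 / sqrt b
      + m1 * inv_dist_remainder a1 b c + m2 * inv_dist_remainder a2 b c)"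
    unfolding inv_dist_remainder_def m3[symmetric] using c
    by (simp add: field_simps power2_eq_square power3_eq_cube)
  finally show ?thesis
    using c by simp
qed

lemma K4_pos:
  fixes mu m :: real
  assumes "0 < mu" and "mu \<le> 1/2" and "0 < m" and "m < 1 - mu"
  shows "0 < K4 (1 - mu - m) mu m"
proof -
  have "K4 (1 - mu - m) mu m = mu * (1 - 2 * mu) + 2 * m * (1 - mu - m)"
    by (simp add: K4_def algebra_simps)
  moreover have "0 \<le> mu * (1 - 2 * mu)" and "0 < 2 * m * (1 - mu - m)"
    using assms by simp_all
  ultimately show ?thesis
    by linarith
qed

lemma tendsto_primary_offsets:
  fixes mu :: real
  assumes "0 < mu" and "mu \<le> 1/2"
  shows "((\<lambda>m. px3 (1 - mu - m) mu m - px1 (1 - mu - m) mu m) \<longlongrightarrow> 1/2) (at_right 0)"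
    and "((\<lambda>m. py3 (1 - mu - m) mu m - py1 (1 - mu - m) mu m) \<longlongrightarrow> sqrt 3 / 2) (at_right 0)"
    and "((\<lambda>m. px3 (1 - mu - m) mu m - px2 (1 - mu - m) mu m) \<longlongrightarrow> - 1/2) (at_right 0)"
    and "((\<lambda>m. py3 (1 - mu - m) mu m - py2 (1 - mu - m) mu m) \<longlongrightarrow> sqrt 3 / 2) (at_right 0)"
proof -
  define K S where "K m = K4 (1 - mu - m) mu m" and "S m = S4 (1 - mu - m) mu m" for m
  have K: "(K \<longlongrightarrow> mu * (1 - 2 * mu)) (at_right 0)"
    unfolding K_def K4_def by (auto intro!: tendsto_eq_intros simp: algebra_simps)
  have S: "(S \<longlongrightarrow> mu) (at_right 0)"
    unfolding S_def S4_def using assms(1) by (auto intro!: tendsto_eq_intros)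
  have "eventually (\<lambda>m. m \<in> {0<..<1/2}) (at_right (0::real))"
    by (rule eventually_at_right_real) simp
  then have "eventually (\<lambda>m.
      px3 (1 - mu - m) mu m - px1 (1 - mu - m) mu m = K m / (2 * S m) + S m \<and>
      py3 (1 - mu - m) mu m - py1 (1 - mu - m) mu m = sqrt 3 * mu / (2 * S m) \<and>
      px3 (1 - mu - m) mu m - px2 (1 - mu - m) mu m
        = (K m - ((mu - m) * m + (1 - mu - m) * (2 * mu + m))) / (2 * S m) \<and>
      py3 (1 - mu - m) mu m - py2 (1 - mu - m) mu m = sqrt 3 * (mu + m) / (2 * S m))
    (at_right 0)"
  proof eventually_elim
    case (elim m)
    then have "0 < K m"
      using K4_pos assms by (simp add: K_def)
    note P = primary_positions[of mu m "1 - mu - m", folded K_def S_def, OF assms(1) _ this]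
    show ?case
      using elim P by (simp add: py1_def diff_divide_distrib add_divide_distrib algebra_simps)
  qed
  moreover have "((\<lambda>m. K m / (2 * S m) + S m) \<longlongrightarrow> 1/2) (at_right 0)"
    and "((\<lambda>m. sqrt 3 * mu / (2 * S m)) \<longlongrightarrow> sqrt 3 / 2) (at_right 0)"
    and "((\<lambda>m. (K m - ((mu - m) * m + (1 - mu - m) * (2 * mu + m))) / (2 * S m)) \<longlongrightarrow> - 1/2)
      (at_right 0)"
    and "((\<lambda>m. sqrt 3 * (mu + m) / (2 * S m)) \<longlongrightarrow> sqrt 3 / 2) (at_right 0)"
    using assms(1) by (auto intro!: tendsto_eq_intros K S simp: field_simps)
  ultimately show "((\<lambda>m. px3 (1 - mu - m) mu m - px1 (1 - mu - m) mu m) \<longlongrightarrow> 1/2) (at_right 0)"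
    and "((\<lambda>m. py3 (1 - mu - m) mu m - py1 (1 - mu - m) mu m) \<longlongrightarrow> sqrt 3 / 2) (at_right 0)"
    and "((\<lambda>m. px3 (1 - mu - m) mu m - px2 (1 - mu - m) mu m) \<longlongrightarrow> - 1/2) (at_right 0)"
    and "((\<lambda>m. py3 (1 - mu - m) mu m - py2 (1 - mu - m) mu m) \<longlongrightarrow> sqrt 3 / 2) (at_right 0)"
    by (auto elim: Lim_transform_eventually[OF _ eventually_mono, rotated])
qed

lemma H4_scaled_eq_expansion:
  fixes mu m x y z p_x p_y p_z :: real
  defines "c \<equiv> m powr (1/3)" and "b \<equiv> x^2 + y^2 + z^2"
    and "a1 \<equiv> (px3 (1 - mu - m) mu m - px1 (1 - mu - m) mu m) * x
      + (py3 (1 - mu - m) mu m - py1 (1 - mu - m) mu m) * y"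
    and "a2 \<equiv> (px3 (1 - mu - m) mu m - px2 (1 - mu - m) mu m) * x
      + (py3 (1 - mu - m) mu m - py2 (1 - mu - m) mu m) * y"
  assumes mu: "0 < mu" "mu \<le> 1/2" and m: "0 < m" "m < 1/2"
  shows "H4_scaled mu m x y z p_x p_y p_z
    = (p_x^2 + p_y^2 + p_z^2) / 2 + y * p_x - x * p_y - 1 / sqrt b
      + (1 - mu - m) * inv_dist_remainder a1 b c + mu * inv_dist_remainder a2 b c"
proof -
  have "m powr (-(2/3)) = 1 / c^2" and "0 < c" and "c^3 = m"
    using m by (simp_all add: c_def powr_realpow[symmetric] powr_powr powr_minus_divide)
  moreover have "0 < K4 (1 - mu - m) mu m"
    using K4_pos mu m by simp
  ultimately show ?thesis
    unfolding H4_scaled_def Let_def c_def[symmetric] a1_def a2_def b_def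
    using H4_trans_scaled_expansion mu by simp
qed

lemma H_lim_tidal_decomposition:
  fixes mu x y z p_x p_y p_z :: real
  defines "b \<equiv> x^2 + y^2 + z^2"
  shows "H_lim mu x y z p_x p_y p_z
    = (p_x^2 + p_y^2 + p_z^2) / 2 + y * p_x - x * p_y - 1 / sqrt b
      + (1 - mu) * ((b - 3 * (1/2 * x + sqrt 3 / 2 * y)^2) / 2)
      + mu * ((b - 3 * (- 1/2 * x + sqrt 3 / 2 * y)^2) / 2)"
  unfolding H_lim_def b_def by (simp add: field_simps power2_eq_square)

theorem theorem1:
  fixes mu x y z p_x p_y p_z :: real
  assumes "0 < mu" and "mu \<le> 1 / 2"
    and "(x, y, z) \<noteq> (0, 0, 0)"
  shows "((\<lambda>m3. H4_scaled mu m3 x y z p_x p_y p_z) \<longlongrightarrow> H_lim mu x y z p_x p_y p_z)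
           (at_right 0)"
proof -
  define b c a1 a2 where "b = x^2 + y^2 + z^2" and "c m = m powr (1/3)"
    and "a1 m = (px3 (1 - mu - m) mu m - px1 (1 - mu - m) mu m) * x
      + (py3 (1 - mu - m) mu m - py1 (1 - mu - m) mu m) * y"
    and "a2 m = (px3 (1 - mu - m) mu m - px2 (1 - mu - m) mu m) * x
      + (py3 (1 - mu - m) mu m - py2 (1 - mu - m) mu m) * y" for m :: real
  have c: "(c \<longlongrightarrow> 0) (at_right 0)" and c_nonzero: "eventually (\<lambda>m. c m \<noteq> 0) (at_right 0)"
    unfolding c_def by (auto intro!: tendsto_zero_powrI intro: eventually_mono[OF eventually_at_right_less])
  have "(a1 \<longlongrightarrow> 1/2 * x + sqrt 3 / 2 * y) (at_right 0)"
    and "(a2 \<longlongrightarrow> - 1/2 * x + sqrt 3 / 2 * y) (at_right 0)"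
    unfolding a1_def a2_def using tendsto_primary_offsets[OF assms(1,2)]
    by (intro tendsto_add tendsto_mult_right; simp)+
  then have "((\<lambda>m. inv_dist_remainder (a1 m) b (c m))
        \<longlongrightarrow> (b - 3 * (1/2 * x + sqrt 3 / 2 * y)^2) / 2) (at_right 0)"
    and "((\<lambda>m. inv_dist_remainder (a2 m) b (c m))
        \<longlongrightarrow> (b - 3 * (- 1/2 * x + sqrt 3 / 2 * y)^2) / 2) (at_right 0)"
    by (blast intro: tendsto_inv_dist_remainder c c_nonzero)+
  then have "((\<lambda>m. (p_x^2 + p_y^2 + p_z^2) / 2 + y * p_x - x * p_y - 1 / sqrt b
      + (1 - mu - m) * inv_dist_remainder (a1 m) b (c m) + mu * inv_dist_remainder (a2 m) b (c m))
      \<longlongrightarrow> H_lim mu x y z p_x p_y p_z) (at_right 0)"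
    unfolding H_lim_tidal_decomposition b_def[symmetric] by (auto intro!: tendsto_eq_intros)
  moreover have "eventually (\<lambda>m. m \<in> {0<..<1/2}) (at_right (0::real))"
    by (rule eventually_at_right_real) simp
  ultimately show ?thesis
    by (elim Lim_transform_eventually eventually_mono)
      (auto simp: a1_def a2_def b_def c_def intro!: H4_scaled_eq_expansion[symmetric] assms(1,2))
qed

end
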